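(* Let $f(x,y;\theta)$ be a scalar function, differentiable in $\theta$ and $y$, and fix points $y^1,\ldots,y^k \in (0,1)^n$. Let $G\in\mathbb{R}^{k\times n}$ have rows $g_i^T = \nabla_y f(x,y^i;\theta)^T$ and $h\in\mathbb{R}^k$ have entries $h_i = f(x,y^i;\theta) - \nabla_y f(x,y^i;\theta)^T y^i$. Let $\hat y(x;\theta)$ be the $y$-component of the solution of $$\min_{y,t}\; t - H(y) \quad\text{s.t.}\quad Gy + h \le t\mathbf{1},$$ where $H(y) = -\sum_{j=1}^n\big(y_j\log y_j + (1-y_j)\log(1-y_j)\big)$, and let $\lambda\in\mathbb{R}^k$ be the optimal dual variable (all $k$ constraints being active at the solution). For a differentiable loss $\ell(\hat y, y^\star)$, the gradient of $\ell(\hat y(x;\theta),y^\star)$ with respect to $\theta$ is $$\nabla_\theta \ell(\hat y(x;\theta),y^\star) = \sum_{i=1}^k\Big( c^\lambda_i \nabla_\theta f(x,y^i;\theta) + \nabla_\theta\Big(\nabla_y f(x,y^i;\theta)^T\big(\lambda_i c^y + c^\lambda_i(\hat y(x;\theta) - y^i)\big)\Big)\Big),$$ where $(c^y, c^\lambda, c^t)\in\mathbb{R}^n\times\mathbb{R}^k\times\mathbb{R}$ solve the linear system $$\begin{bmatrix} D & G^T & 0\\ G & 0 & -\mathbf{1}\\ 0 & -\mathbf{1}^T & 0\end{bmatrix}\begin{bmatrix} c^y\\ c^\lambda\\ c^t\end{bmatrix} = \begin{bmatrix} -\nabla_{\hat y}\ell(\hat y,y^\star)\\ 0\\ 0\end{bmatrix},\qquad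 D = \operatorname{diag}\!\left(\frac{1}{\hat y}+\frac{1}{1-\hat y}\right).$$
   Context: This is the setting of the "bundle entropy method" for approximately minimizing $f(x,y;\theta) - H(y)$ over $y\in[0,1]^n$: $y^i$ is the iterate produced at the $i$-th iteration, and the cutting planes $g_i^T y + h_i$ are first-order approximations of $f(x,\cdot;\theta)$ at $y^i$; $\hat y(x;\theta)$ is the approximate minimizer returned at the last iteration, and $k$ is the number of active cutting planes kept. In the gradient, $\hat y$ depends on $\theta$ through $G$ and $h$ (the points $y^i$ are held fixed), and the term $\nabla_\theta(\nabla_y f(x,y^i;\theta)^T v)$ denotes the gradient in $\theta$ of the scalar $\nabla_y f(x,y^i;\theta)^T v$ with the vector $v$ held fixed. The fraction in $D$ is taken elementwise; $\mathbf{1}$ denotes the all-ones vector; the linear system is assumed nonsingular. *)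

theory Defs
  imports "HOL-Analysis.Analysis"
begin

definition grad :: "('a::real_inner \<Rightarrow> real) \<Rightarrow> 'a \<Rightarrow> 'a" where
  "grad f a = (THE D. GDERIV f a :> D)"

text \<open>Binary entropy H(y) = - sum_j (y_j log y_j + (1 - y_j) log (1 - y_j)), with 0 log 0 = 0
  (which is Isabelle's convention since ln 0 = 0).\<close>
definition entropy :: "real^'n \<Rightarrow> real" where
  "entropy y = - (\<Sum>j\<in>UNIV. y$j * ln (y$j) + (1 - y$j) * ln (1 - y$j))"

definition unit_box :: "(real^'n) set" where
  "unit_box = {y. \<forall>j. 0 \<le> y$j \<and> y$j \<le> 1}"

definition Gmat :: "('x \<Rightarrow> real^'n \<Rightarrow> 'p \<Rightarrow> real) \<Rightarrow> 'x \<Rightarrow> ('k \<Rightarrow> real^'n) \<Rightarrow> 'p \<Rightarrow> real^'n^'k" where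
  "Gmat f x ys \<theta> = (\<chi> i. grad (\<lambda>y. f x y \<theta>) (ys i))"

definition hvec :: "('x \<Rightarrow> real^'n \<Rightarrow> 'p \<Rightarrow> real) \<Rightarrow> 'x \<Rightarrow> ('k \<Rightarrow> real^'n) \<Rightarrow> 'p \<Rightarrow> real^'k" where
  "hvec f x ys \<theta> = (\<chi> i. f x (ys i) \<theta> - (Gmat f x ys \<theta> $ i) \<bullet> ys i)"

definition bundle_feasible :: "real^'n^'k \<Rightarrow> real^'k \<Rightarrow> real^'n \<Rightarrow> real \<Rightarrow> bool" where
  "bundle_feasible G h y t \<longleftrightarrow> y \<in> unit_box \<and> (\<forall>i. (G *v y + h) $ i \<le> t)"

definition bundle_solution :: "real^'n^'k \<Rightarrow> real^'k \<Rightarrow> real^'n \<Rightarrow> real \<Rightarrow> bool" where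
  "bundle_solution G h y t \<longleftrightarrow> bundle_feasible G h y t \<and>
     (\<forall>y' t'. bundle_feasible G h y' t' \<longrightarrow> t - entropy y \<le> t' - entropy y')"

definition bundle_lagrangian :: "real^'n^'k \<Rightarrow> real^'k \<Rightarrow> real^'k \<Rightarrow> real^'n \<Rightarrow> real \<Rightarrow> real" where
  "bundle_lagrangian G h lam y t = t - entropy y + lam \<bullet> (G *v y + h - (\<chi> i. t))"

definition bundle_opt_dual :: "real^'n^'k \<Rightarrow> real^'k \<Rightarrow> real^'n \<Rightarrow> real \<Rightarrow> real^'k \<Rightarrow> bool" where
  "bundle_opt_dual G h y t lam \<longleftrightarrow> (\<forall>i. 0 \<le> lam $ i) \<and>
     (\<forall>y'\<in>unit_box. \<forall>t'. bundle_lagrangian G h lam y t \<le> bundle_lagrangian G h lam y' t') \<and>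
     (\<forall>i. lam $ i * ((G *v y + h) $ i - t) = 0)"

text \<open>The block matrix [[D, G^T, 0], [G, 0, -1], [0, -1^T, 0]], D = diag(1/y + 1/(1-y)),
  indexed by 'n + ('k + unit).\<close>
definition kkt_matrix :: "real^'n^'k \<Rightarrow> real^'n \<Rightarrow> real^('n + ('k + unit))^('n + ('k + unit))" where
  "kkt_matrix G y = (\<chi> r c. case (r, c) of
      (Inl a, Inl b) \<Rightarrow> (if a = b then 1 / y$a + 1 / (1 - y$a) else 0)
    | (Inl a, Inr (Inl i)) \<Rightarrow> G $ i $ a
    | (Inl a, Inr (Inr _)) \<Rightarrow> 0
    | (Inr (Inl i), Inl b) \<Rightarrow> G $ i $ b
    | (Inr (Inl i), Inr (Inl j)) \<Rightarrow> 0
    | (Inr (Inl i), Inr (Inr _)) \<Rightarrow> -1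
    | (Inr (Inr _), Inl b) \<Rightarrow> 0
    | (Inr (Inr _), Inr (Inl j)) \<Rightarrow> -1
    | (Inr (Inr _), Inr (Inr _)) \<Rightarrow> 0)"

definition stack3 :: "real^'n \<Rightarrow> real^'k \<Rightarrow> real \<Rightarrow> real^('n + ('k + unit))" where
  "stack3 u v s = (\<chi> r. case r of Inl a \<Rightarrow> u$a | Inr (Inl i) \<Rightarrow> v$i | Inr (Inr _) \<Rightarrow> s)"

end

theory Submission
  imports Defs
begin

text \<open>Dual optimality forces \<open>\<Sum>i. lam i = 1\<close> and \<open>yhat = sigmoid (lam v* G)\<close> coordinatewise,
  so \<open>(yhat, lam, tt)\<close> is a zero of the residual \<open>(ln y - ln (1 - y) + l v* G, G y + h - t 1, 1 - \<Sum>i. l i)\<close>,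
  whose Jacobian in \<open>(y, l, t)\<close> is the KKT matrix \<open>K\<close>. Nonsingularity of \<open>K\<close> and strict convexity
  of the entropy make the multiplier unique; compactness of the simplex turns uniqueness into
  continuity of \<open>(yhat, lam, tt)\<close>, and an implicit function argument then gives the derivative of
  \<open>yhat\<close> as the first block of \<open>-K\<inverse>\<close> applied to the \<open>\<theta>\<close>-derivative of the residual. Pairing with
  the loss gradient and using the symmetry of \<open>K\<close> moves \<open>K\<inverse>\<close> onto the loss side, where it
  produces \<open>(cy, clam, ct)\<close>.\<close>

lemma has_gderiv_grad:
  fixes \<phi> :: "'a::euclidean_space \<Rightarrow> real"
  assumes "\<phi> differentiable (at a)"
  shows "GDERIV \<phi> a :> grad \<phi> a"
proof -
  obtain D where D: "(\<phi> has_derivative D) (at a)"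
    using assms differentiable_def by blast
  have ex: "GDERIV \<phi> a :> adjoint D 1"
    using D adjoint_works[OF has_derivative_linear[OF D], of _ 1] by (simp add: gderiv_def)
  have "d = adjoint D 1" if "GDERIV \<phi> a :> d" for d
    using has_derivative_unique[OF that[unfolded gderiv_def] ex[unfolded gderiv_def]]
    by (metis vector_eq_ldot)
  then show ?thesis
    unfolding grad_def using ex by (metis theI)
qed

lemma has_derivative_vec_lambda:
  fixes c :: "'m::finite \<Rightarrow> 'a::real_normed_vector \<Rightarrow> 'b::euclidean_space"
  assumes "\<And>i. (c i has_derivative c' i) (at a within S)"
  shows "((\<lambda>x. \<chi> i. c i x) has_derivative (\<lambda>h. \<chi> i. c' i h)) (at a within S)"
proof (subst has_derivative_componentwise_within, intro ballI)
  fix b :: "'b^'m" assume "b \<in> Basis"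
  then have "b \<in> (\<Union>i. \<Union>u\<in>Basis. {axis i u})"
    by (simp only: Basis_vec_def)
  then obtain i e where b: "b = axis i e" and e: "e \<in> Basis"
    by blast
  have "((\<lambda>x. c i x \<bullet> e) has_derivative (\<lambda>h. c' i h \<bullet> e)) (at a within S)"
    using has_derivative_componentwise_within[THEN iffD1, OF assms[of i]] e by blast
  then show "((\<lambda>x. (\<chi> i. c i x) \<bullet> b) has_derivative (\<lambda>h. (\<chi> i. c' i h) \<bullet> b)) (at a within S)"
    unfolding b inner_axis vec_lambda_beta .
qed

lemma implicit_linearization_error:
  fixes F :: "('a::real_normed_vector \<times> 'b::real_normed_vector) \<Rightarrow> 'c::real_normed_vector"
    and z :: "'b \<Rightarrow> 'a"
  assumes derF: "(F has_derivative F') (at (z b0, b0))"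
    and L: "bounded_linear L" and LF: "\<And>u. L (F' (u, 0)) = u"
    and contz: "continuous (at b0) z"
    and T: "open T" "b0 \<in> T" and eq: "\<And>b. b \<in> T \<Longrightarrow> F (z b, b) = F (z b0, b0)"
    and \<epsilon>: "\<epsilon> > 0"
  shows "\<exists>d>0. \<forall>b. norm (b - b0) < d \<longrightarrow>
     norm ((z b - z b0) + L (F' (0, b - b0))) \<le> \<epsilon> * (norm (z b - z b0) + norm (b - b0))"
proof -
  obtain C where C: "0 < C" "\<And>x. norm (L x) \<le> norm x * C"
    using bounded_linear.pos_bounded[OF L] by blast
  have L_F': "L (F' (z b - z b0, b - b0)) = (z b - z b0) + L (F' (0, b - b0))" for b
  proof -
    have "F' (z b - z b0, b - b0) = F' (z b - z b0, 0) + F' (0, b - b0)"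
      using linear_add[OF has_derivative_linear[OF derF], of "(z b - z b0, 0)" "(0, b - b0)"] by simp
    then show ?thesis
      using linear_add[OF bounded_linear.linear[OF L]] LF by simp
  qed
  obtain d0 where d0: "d0 > 0" and F_lin: "\<And>w. norm (w - (z b0, b0)) < d0 \<Longrightarrow>
      norm (F w - F (z b0, b0) - F' (w - (z b0, b0))) \<le> \<epsilon> / C * norm (w - (z b0, b0))"
    using derF \<epsilon> C unfolding has_derivative_at_alt by (meson divide_pos_pos)
  obtain d1 where d1: "d1 > 0" and z_close: "\<And>b. dist b b0 < d1 \<Longrightarrow> dist (z b) (z b0) < d0 / 2"
    using contz d0 unfolding continuous_at_eps_delta by (meson half_gt_zero)
  obtain d2 where d2: "d2 > 0" and in_T: "\<And>b. dist b b0 < d2 \<Longrightarrow> b \<in> T"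
    using T unfolding open_dist by (metis dist_commute)
  show ?thesis
  proof (intro exI[of _ "min (min d1 d2) (d0 / 2)"] conjI allI impI)
    show "0 < min (min d1 d2) (d0 / 2)"
      using d0 d1 d2 by simp
    fix b assume b: "norm (b - b0) < min (min d1 d2) (d0 / 2)"
    let ?\<Delta> = "norm (z b - z b0) + norm (b - b0)"
    have \<Delta>: "norm ((z b, b) - (z b0, b0)) \<le> ?\<Delta>"
      using norm_Pair_le[of "z b - z b0" "b - b0"] by simp
    moreover have "norm (z b - z b0) < d0 / 2" "b \<in> T"
      using z_close[of b] in_T[of b] b by (simp_all add: dist_norm)
    ultimately have "norm (F' (z b - z b0, b - b0)) \<le> \<epsilon> / C * norm ((z b, b) - (z b0, b0))"
      using F_lin[of "(z b, b)"] eq b by simp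
    also have "\<dots> \<le> \<epsilon> / C * ?\<Delta>"
      using \<Delta> \<epsilon> C by (intro mult_left_mono) auto
    finally have "norm (F' (z b - z b0, b - b0)) * C \<le> \<epsilon> * ?\<Delta>"
      using C by (simp add: field_simps)
    then show "norm ((z b - z b0) + L (F' (0, b - b0))) \<le> \<epsilon> * ?\<Delta>"
      using C(2)[of "F' (z b - z b0, b - b0)"] unfolding L_F' by linarith
  qed
qed

lemma implicit_function_lipschitz_at:
  fixes F :: "('a::real_normed_vector \<times> 'b::real_normed_vector) \<Rightarrow> 'c::real_normed_vector"
    and z :: "'b \<Rightarrow> 'a"
  assumes derF: "(F has_derivative F') (at (z b0, b0))"
    and L: "bounded_linear L" and LF: "\<And>u. L (F' (u, 0)) = u"
    and contz: "continuous (at b0) z"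
    and T: "open T" "b0 \<in> T" and eq: "\<And>b. b \<in> T \<Longrightarrow> F (z b, b) = F (z b0, b0)"
  obtains B d where "0 < B" "0 < d" "\<And>b. norm (b - b0) < d \<Longrightarrow> norm (z b - z b0) \<le> B * norm (b - b0)"
proof -
  have "bounded_linear (\<lambda>v. L (F' (0, v)))"
    using bounded_linear_compose[OF L bounded_linear_compose[OF has_derivative_bounded_linear[OF derF]]]
      bounded_linear_Pair[OF bounded_linear_zero bounded_linear_ident] by blast
  then obtain C where C: "0 < C" "\<And>v. norm (L (F' (0, v))) \<le> norm v * C"
    using bounded_linear.pos_bounded by blast
  obtain d where d: "d > 0" and small: "\<And>b. norm (b - b0) < d \<Longrightarrow>
     norm ((z b - z b0) + L (F' (0, b - b0))) \<le> 1/2 * (norm (z b - z b0) + norm (b - b0))"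
    using implicit_linearization_error[OF assms, of "1/2"] by auto
  show ?thesis
  proof
    show "0 < 1 + 2 * C" "0 < d"
      using C d by simp_all
    fix b assume b: "norm (b - b0) < d"
    have "norm (z b - z b0) \<le> norm ((z b - z b0) + L (F' (0, b - b0))) + norm (L (F' (0, b - b0)))"
      by (metis add_diff_cancel norm_triangle_ineq4)
    also have "\<dots> \<le> 1/2 * (norm (z b - z b0) + norm (b - b0)) + norm (b - b0) * C"
      using small[OF b] C(2)[of "b - b0"] by linarith
    finally show "norm (z b - z b0) \<le> (1 + 2 * C) * norm (b - b0)"
      by (simp add: algebra_simps)
  qed
qed

lemma implicit_function_has_derivative:
  fixes F :: "('a::real_normed_vector \<times> 'b::real_normed_vector) \<Rightarrow> 'c::real_normed_vector"
    and z :: "'b \<Rightarrow> 'a"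
  assumes derF: "(F has_derivative F') (at (z b0, b0))"
    and L: "bounded_linear L" and LF: "\<And>u. L (F' (u, 0)) = u"
    and contz: "continuous (at b0) z"
    and T: "open T" "b0 \<in> T" and eq: "\<And>b. b \<in> T \<Longrightarrow> F (z b, b) = F (z b0, b0)"
  shows "(z has_derivative (\<lambda>v. - L (F' (0, v)))) (at b0)"
  unfolding has_derivative_at_alt
proof (intro conjI allI impI)
  show "bounded_linear (\<lambda>v. - L (F' (0, v)))"
    using bounded_linear_compose[OF L bounded_linear_compose[OF has_derivative_bounded_linear[OF derF]]]
      bounded_linear_Pair[OF bounded_linear_zero bounded_linear_ident] bounded_linear_minus by blast
  obtain B d where B: "0 < B" and d: "0 < d"
    and lip: "\<And>b. norm (b - b0) < d \<Longrightarrow> norm (z b - z b0) \<le> B * norm (b - b0)"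
    using implicit_function_lipschitz_at[OF assms] by blast
  fix e :: real assume e: "e > 0"
  then obtain d' where d': "d' > 0" and small: "\<And>b. norm (b - b0) < d' \<Longrightarrow>
     norm ((z b - z b0) + L (F' (0, b - b0))) \<le> e / (B + 1) * (norm (z b - z b0) + norm (b - b0))"
    using implicit_linearization_error[OF assms, of "e / (B + 1)"] B by auto
  show "\<exists>d>0. \<forall>b. norm (b - b0) < d \<longrightarrow> norm (z b - z b0 - - L (F' (0, b - b0))) \<le> e * norm (b - b0)"
  proof (intro exI[of _ "min d d'"] conjI allI impI)
    show "min d d' > 0"
      using d d' by simp
    fix b assume b: "norm (b - b0) < min d d'"
    have "norm (z b - z b0 - - L (F' (0, b - b0))) \<le> e / (B + 1) * (norm (z b - z b0) + norm (b - b0))"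
      using small b by simp
    also have "\<dots> \<le> e / (B + 1) * (B * norm (b - b0) + norm (b - b0))"
      using lip[of b] b e B by (intro mult_left_mono) auto
    also have "\<dots> = e * norm (b - b0)"
      using B by (simp add: field_simps)
    finally show "norm (z b - z b0 - - L (F' (0, b - b0))) \<le> e * norm (b - b0)" .
  qed
qed

lemma continuous_at_if_compact_cluster_unique:
  fixes \<phi> :: "'a::metric_space \<Rightarrow> 'b::metric_space"
  assumes "compact S" "open U" "a \<in> U" and into_S: "\<And>x. x \<in> U \<Longrightarrow> \<phi> x \<in> S"
    and cluster: "\<And>xs l. xs \<longlonglongrightarrow> a \<Longrightarrow> (\<forall>n. xs n \<in> U) \<Longrightarrow> (\<lambda>n. \<phi> (xs n)) \<longlonglongrightarrow> l \<Longrightarrow> l = \<phi> a"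
  shows "continuous (at a) \<phi>"
  unfolding continuous_at_sequentially comp_def
proof (intro allI impI)
  fix xs assume xs: "xs \<longlonglongrightarrow> a"
  show "(\<lambda>n. \<phi> (xs n)) \<longlonglongrightarrow> \<phi> a"
  proof (rule ccontr)
    assume "\<not> (\<lambda>n. \<phi> (xs n)) \<longlonglongrightarrow> \<phi> a"
    then obtain e where e: "e > 0" and far: "\<not> eventually (\<lambda>n. dist (\<phi> (xs n)) (\<phi> a) < e) sequentially"
      unfolding tendsto_iff by auto
    have "eventually (\<lambda>n. xs n \<in> U) sequentially"
      using xs assms(2,3) by (rule topological_tendstoD)
    from not_eventually_impI[OF this far] obtain r :: "nat \<Rightarrow> nat"
      where r: "strict_mono r" and r_far: "\<And>n. xs (r n) \<in> U \<and> \<not> dist (\<phi> (xs (r n))) (\<phi> a) < e"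
      by (blast dest: not_eventually_sequentiallyD)
    obtain l r2 where r2: "strict_mono r2" and lim: "((\<lambda>n. \<phi> (xs (r n))) \<circ> r2) \<longlonglongrightarrow> l"
      using compact_imp_seq_compact[OF assms(1)] into_S r_far unfolding seq_compact_def by metis
    have "(xs \<circ> (r \<circ> r2)) \<longlonglongrightarrow> a"
      using LIMSEQ_subseq_LIMSEQ[OF xs strict_mono_o[OF r r2]] .
    then have "l = \<phi> a"
      using lim r_far by (intro cluster[of "xs \<circ> (r \<circ> r2)"]) (simp_all add: comp_def)
    then have "eventually (\<lambda>n. dist (\<phi> (xs (r (r2 n)))) (\<phi> a) < e) sequentially"
      using lim e unfolding tendsto_iff comp_def by blast
    then show False
      using r_far by (auto simp: eventually_sequentially)
  qed
qed

lemma has_derivative_vec_nth [derivative_intros]: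
  "(f has_derivative f') F \<Longrightarrow> ((\<lambda>x. f x $ i) has_derivative (\<lambda>h. f' h $ i)) F"
  by (rule bounded_linear.has_derivative[OF bounded_linear_vec_nth])

lemma has_derivative_matrix_vector_mult [derivative_intros]:
  fixes A :: "'a::real_normed_vector \<Rightarrow> real^'n^'m"
  assumes "(A has_derivative A') (at a within S)" "(b has_derivative b') (at a within S)"
  shows "((\<lambda>x. A x *v b x) has_derivative (\<lambda>v. A' v *v b a + A a *v b' v)) (at a within S)"
  unfolding matrix_vector_mult_def
  by (rule has_derivative_eq_rhs, rule has_derivative_vec_lambda,
      (rule has_derivative_sum has_derivative_mult has_derivative_vec_nth assms)+)
    (simp add: fun_eq_iff vec_eq_iff sum.distrib algebra_simps)

lemma has_derivative_vector_matrix_mult [derivative_intros]: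
  fixes A :: "'a::real_normed_vector \<Rightarrow> real^'n^'m"
  assumes "(b has_derivative b') (at a within S)" "(A has_derivative A') (at a within S)"
  shows "((\<lambda>x. b x v* A x) has_derivative (\<lambda>v. b' v v* A a + b a v* A' v)) (at a within S)"
  unfolding vector_matrix_mult_def
  by (rule has_derivative_eq_rhs, rule has_derivative_vec_lambda,
      (rule has_derivative_sum has_derivative_mult has_derivative_vec_nth assms)+)
    (simp add: fun_eq_iff vec_eq_iff sum.distrib algebra_simps)

lemma compact_prob_simplex_cart: "compact {l :: real^'k. (\<forall>i. 0 \<le> l $ i) \<and> (\<Sum>i\<in>UNIV. l $ i) = 1}"
  (is "compact ?S")
  unfolding compact_eq_bounded_closed
proof
  have "norm l \<le> 1" if "l \<in> ?S" for l
    using norm_le_l1_cart[of l] that by simp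
  then show "bounded ?S"
    by (auto simp: bounded_iff)
  have "?S = {l. \<forall>i. 0 \<le> l $ i} \<inter> {l. (\<Sum>i\<in>UNIV. l $ i) = 1}"
    by auto
  then show "closed ?S"
    by (simp only:) (intro closed_Int closed_Collect_all closed_Collect_le closed_Collect_eq continuous_intros)
qed

text \<open>Note the sign: \<open>sigmoid c\<close> is the logistic function at \<open>-c\<close>, the minimizer of
  \<open>neg_binary_entropy s + c * s\<close> on \<open>[0, 1]\<close>.\<close>
definition sigmoid :: "real \<Rightarrow> real" where
  "sigmoid c = 1 / (1 + exp c)"

definition neg_binary_entropy :: "real \<Rightarrow> real" where
  "neg_binary_entropy s = s * ln s + (1 - s) * ln (1 - s)"

lemma one_plus_exp_gt_0: "0 < 1 + exp (c::real)"
  by (simp add: add_pos_pos)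

lemma sigmoid_gt_0: "0 < sigmoid c"
  and sigmoid_less_1: "sigmoid c < 1"
  unfolding sigmoid_def by (auto simp: one_plus_exp_gt_0)

lemma ln_sigmoid_diff: "ln (sigmoid c) - ln (1 - sigmoid c) = - c"
proof -
  have "1 - sigmoid c = exp c / (1 + exp c)"
    using one_plus_exp_gt_0[of c] unfolding sigmoid_def by (simp add: field_simps)
  then show ?thesis
    using one_plus_exp_gt_0[of c] unfolding sigmoid_def by (simp add: ln_div)
qed

lemma inj_sigmoid: "inj sigmoid"
  by (rule injI) (metis ln_sigmoid_diff neg_equal_iff_equal)

lemma tendsto_sigmoid [tendsto_intros]:
  "(f \<longlongrightarrow> c) F \<Longrightarrow> ((\<lambda>x. sigmoid (f x)) \<longlongrightarrow> sigmoid c) F"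
  using one_plus_exp_gt_0[of c] unfolding sigmoid_def by (intro tendsto_intros) auto

lemma xlnx_bregman_nonneg:
  fixes p q :: real
  assumes "0 < q" "0 \<le> p"
  shows "0 \<le> p * ln p - p * ln q - (p - q)"
    and "p * ln p - p * ln q - (p - q) = 0 \<Longrightarrow> p = q"
proof -
  have "0 \<le> p * ln p - p * ln q - (p - q) \<and> (p * ln p - p * ln q - (p - q) = 0 \<longrightarrow> p = q)"
  proof (cases "p = 0")
    case False
    with assms have p: "0 < p" by simp
    have "p * ln p - p * ln q - (p - q) = p * ((q / p - 1) - ln (q / p))"
      using p assms by (simp add: ln_div algebra_simps)
    moreover have "0 \<le> (q / p - 1) - ln (q / p)" "ln (q / p) = q / p - 1 \<Longrightarrow> p = q"
      using ln_le_minus_one[of "q / p"] ln_eq_minus_one[of "q / p"] p assms by auto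
    ultimately show ?thesis using p by auto
  qed (use assms in simp)
  then show "0 \<le> p * ln p - p * ln q - (p - q)" "p * ln p - p * ln q - (p - q) = 0 \<Longrightarrow> p = q"
    by auto
qed

lemma neg_binary_entropy_plus_linear_excess:
  fixes s c :: real
  assumes "0 \<le> s" "s \<le> 1"
  defines "q \<equiv> sigmoid c"
  shows "neg_binary_entropy s + c * s - (neg_binary_entropy q + c * q)
    = (s * ln s - s * ln q - (s - q)) + ((1 - s) * ln (1 - s) - (1 - s) * ln (1 - q) - ((1 - s) - (1 - q)))"
proof -
  have "c = ln (1 - q) - ln q"
    using ln_sigmoid_diff[of c] unfolding q_def by simp
  then show ?thesis
    unfolding neg_binary_entropy_def by (subst (1 2) \<open>c = _\<close>) (simp add: algebra_simps)
qed

lemma sigmoid_minimizes: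
  assumes "0 \<le> s" "s \<le> 1"
  shows "neg_binary_entropy (sigmoid c) + c * sigmoid c \<le> neg_binary_entropy s + c * s"
    and "neg_binary_entropy s + c * s \<le> neg_binary_entropy (sigmoid c) + c * sigmoid c
      \<Longrightarrow> s = sigmoid c"
proof -
  let ?q = "sigmoid c"
  have q: "0 < ?q" "0 < 1 - ?q"
    using sigmoid_gt_0 sigmoid_less_1 by (auto simp: algebra_simps)
  have a: "0 \<le> s * ln s - s * ln ?q - (s - ?q)"
    using xlnx_bregman_nonneg(1) q assms by simp
  have b: "0 \<le> (1 - s) * ln (1 - s) - (1 - s) * ln (1 - ?q) - ((1 - s) - (1 - ?q))"
    using xlnx_bregman_nonneg(1)[of "1 - ?q" "1 - s"] q assms by simp
  note excess = neg_binary_entropy_plus_linear_excess[OF assms, of c]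
  show "neg_binary_entropy ?q + c * ?q \<le> neg_binary_entropy s + c * s"
    using excess a b by linarith
  assume "neg_binary_entropy s + c * s \<le> neg_binary_entropy ?q + c * ?q"
  then have "s * ln s - s * ln ?q - (s - ?q) = 0"
    using excess a b by linarith
  then show "s = ?q"
    using xlnx_bregman_nonneg(2) q assms by simp
qed

definition primal_point :: "real^'n^'k \<Rightarrow> real^'k \<Rightarrow> real^'n" where
  "primal_point G l = (\<chi> j. sigmoid ((l v* G) $ j))"

lemma primal_point_in_unit_box: "primal_point G l \<in> unit_box"
  unfolding unit_box_def primal_point_def using sigmoid_gt_0 sigmoid_less_1 by (auto intro: less_imp_le)

lemma tendsto_primal_point [tendsto_intros]:
  "(G \<longlongrightarrow> G0) F \<Longrightarrow> (l \<longlongrightarrow> l0) F \<Longrightarrow> ((\<lambda>x. primal_point (G x) (l x)) \<longlongrightarrow> primal_point G0 l0) F"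
  unfolding primal_point_def vector_matrix_mult_def by (intro tendsto_intros)

lemma bundle_lagrangian_eq:
  "bundle_lagrangian G h l y t = t * (1 - (\<Sum>i\<in>UNIV. l $ i)) + l \<bullet> h
     + (\<Sum>j\<in>UNIV. neg_binary_entropy (y $ j) + (l v* G) $ j * y $ j)"
proof -
  have "l \<bullet> (G *v y) = (\<Sum>j\<in>UNIV. (l v* G) $ j * y $ j)"
    using dot_lmul_matrix[of l G y] by (simp add: inner_vec_def)
  moreover have "l \<bullet> (\<chi> i. t) = t * (\<Sum>i\<in>UNIV. l $ i)"
    by (simp add: inner_vec_def sum_distrib_left mult.commute)
  moreover have "entropy y = - (\<Sum>j\<in>UNIV. neg_binary_entropy (y $ j))"
    unfolding entropy_def neg_binary_entropy_def ..
  ultimately show ?thesis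
    unfolding bundle_lagrangian_def by (simp add: inner_add_right inner_diff_right sum.distrib algebra_simps)
qed

lemma bundle_lagrangian_active:
  assumes "\<And>i. (G *v y + h) $ i = t"
  shows "bundle_lagrangian G h l y t = t - entropy y"
proof -
  have "G *v y + h - (\<chi> i. t) = 0"
    using assms by (simp add: vec_eq_iff)
  then show ?thesis
    unfolding bundle_lagrangian_def by simp
qed

lemma bundle_lagrangian_primal_point_le:
  assumes "(\<Sum>i\<in>UNIV. l $ i) = 1" "y \<in> unit_box"
  shows "bundle_lagrangian G h l (primal_point G l) t' \<le> bundle_lagrangian G h l y t"
    and "bundle_lagrangian G h l y t \<le> bundle_lagrangian G h l (primal_point G l) t'
      \<Longrightarrow> y = primal_point G l"
proof -
  let ?\<phi> = "\<lambda>j s. neg_binary_entropy s + (l v* G) $ j * s"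
  have y: "0 \<le> y $ j" "y $ j \<le> 1" for j
    using assms(2) unfolding unit_box_def by auto
  have le: "?\<phi> j (primal_point G l $ j) \<le> ?\<phi> j (y $ j)" for j
    unfolding primal_point_def using sigmoid_minimizes(1)[OF y] by simp
  show "bundle_lagrangian G h l (primal_point G l) t' \<le> bundle_lagrangian G h l y t"
    unfolding bundle_lagrangian_eq assms(1) using sum_mono[OF le] by simp
  assume "bundle_lagrangian G h l y t \<le> bundle_lagrangian G h l (primal_point G l) t'"
  then have not_less: "\<not> (\<Sum>j\<in>UNIV. ?\<phi> j (primal_point G l $ j)) < (\<Sum>j\<in>UNIV. ?\<phi> j (y $ j))"
    unfolding bundle_lagrangian_eq assms(1) by simp
  have "?\<phi> j (y $ j) \<le> ?\<phi> j (primal_point G l $ j)" for j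
  proof (rule ccontr)
    assume "\<not> ?thesis"
    then have "(\<Sum>j\<in>UNIV. ?\<phi> j (primal_point G l $ j)) < (\<Sum>j\<in>UNIV. ?\<phi> j (y $ j))"
      using le by (auto simp: not_le intro!: sum_strict_mono_ex1)
    with not_less show False ..
  qed
  then show "y = primal_point G l"
    unfolding primal_point_def using sigmoid_minimizes(2)[OF y] by (simp add: vec_eq_iff)
qed

lemma bundle_opt_dual_stationary:
  assumes dual: "bundle_opt_dual G h y t l" and y: "y \<in> unit_box"
  shows "(\<Sum>i\<in>UNIV. l $ i) = 1" and "y = primal_point G l"
proof -
  have min: "\<And>y' t'. y' \<in> unit_box \<Longrightarrow> bundle_lagrangian G h l y t \<le> bundle_lagrangian G h l y' t'"
    using dual unfolding bundle_opt_dual_def by blast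
  from min[OF y, of "t + 1"] min[OF y, of "t - 1"]
  show sum_1: "(\<Sum>i\<in>UNIV. l $ i) = 1"
    unfolding bundle_lagrangian_eq by (simp add: algebra_simps)
  show "y = primal_point G l"
    using bundle_lagrangian_primal_point_le(2)[OF sum_1 y] min[OF primal_point_in_unit_box] by blast
qed

text \<open>Both \<open>l\<close> and \<open>l0\<close> certify the same optimal value; the Lagrangian of \<open>l0\<close> then has two
  minimizers, which the strict convexity of the entropy rules out unless
  \<open>l v* G = l0 v* G\<close>.\<close>
lemma bundle_opt_dual_unique:
  fixes G :: "real^'n^'k"
  assumes dual: "bundle_opt_dual G h y0 t0 l0" and y0: "y0 \<in> unit_box"
    and active: "\<And>i. (G *v y0 + h) $ i = t0"
    and rank: "\<And>\<mu>. \<mu> v* G = 0 \<Longrightarrow> (\<Sum>i\<in>UNIV. \<mu> $ i) = 0 \<Longrightarrow> \<mu> = 0"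
    and l_sum: "(\<Sum>i\<in>UNIV. l $ i) = 1"
    and l_active: "\<And>i i'. (G *v primal_point G l + h) $ i = (G *v primal_point G l + h) $ i'"
  shows "l = l0"
proof -
  obtain i0 :: 'k where True by blast
  define y' where "y' = primal_point G l"
  define t' where "t' = (G *v y' + h) $ i0"
  have active': "\<And>i. (G *v y' + h) $ i = t'"
    using l_active unfolding y'_def t'_def by blast
  have l0_sum: "(\<Sum>i\<in>UNIV. l0 $ i) = 1" and y0_eq: "y0 = primal_point G l0"
    using bundle_opt_dual_stationary[OF dual y0] by auto
  have "t' - entropy y' \<le> t0 - entropy y0"
    using bundle_lagrangian_primal_point_le(1)[OF l_sum y0, where G = G and h = h and t' = t' and t = t0]
    unfolding y'_def[symmetric] bundle_lagrangian_active[OF active'] bundle_lagrangian_active[OF active] .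
  then have "bundle_lagrangian G h l0 y' t' \<le> bundle_lagrangian G h l0 (primal_point G l0) t0"
    unfolding bundle_lagrangian_active[OF active'] y0_eq[symmetric] bundle_lagrangian_active[OF active] .
  then have "y' = primal_point G l0"
    using bundle_lagrangian_primal_point_le(2)[OF l0_sum] primal_point_in_unit_box
    unfolding y'_def by blast
  then have "l v* G = l0 v* G"
    unfolding y'_def primal_point_def using inj_sigmoid by (simp add: vec_eq_iff inj_eq)
  then have "l - l0 = 0"
    using l_sum l0_sum by (intro rank) (simp_all add: vector_matrix_mult_diff_distrib sum_subtractf)
  then show ?thesis by simp
qed

text \<open>The multipliers stay in the compact probability simplex, and by
  \<open>bundle_opt_dual_unique\<close> every cluster value of them at \<open>\<theta>0\<close> is \<open>lam \<theta>0\<close>.\<close>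
lemma bundle_opt_dual_continuous:
  fixes G :: "'p::metric_space \<Rightarrow> real^'n^'k"
  assumes G: "continuous (at \<theta>0) G" and h: "continuous (at \<theta>0) h" and U: "open U" "\<theta>0 \<in> U"
    and box: "\<And>\<theta>. \<theta> \<in> U \<Longrightarrow> yhat \<theta> \<in> unit_box"
    and dual: "\<And>\<theta>. \<theta> \<in> U \<Longrightarrow> bundle_opt_dual (G \<theta>) (h \<theta>) (yhat \<theta>) (tt \<theta>) (lam \<theta>)"
    and active: "\<And>\<theta> i. \<theta> \<in> U \<Longrightarrow> (G \<theta> *v yhat \<theta> + h \<theta>) $ i = tt \<theta>"
    and rank: "\<And>\<mu>. \<mu> v* G \<theta>0 = 0 \<Longrightarrow> (\<Sum>i\<in>UNIV. \<mu> $ i) = 0 \<Longrightarrow> \<mu> = 0"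
  shows "continuous (at \<theta>0) lam"
proof (rule continuous_at_if_compact_cluster_unique[OF compact_prob_simplex_cart U])
  have stationary: "(\<Sum>i\<in>UNIV. lam \<theta> $ i) = 1" "yhat \<theta> = primal_point (G \<theta>) (lam \<theta>)" if "\<theta> \<in> U" for \<theta>
    using bundle_opt_dual_stationary[OF dual box] that by auto
  show in_simplex: "lam \<theta> \<in> {l. (\<forall>i. 0 \<le> l $ i) \<and> (\<Sum>i\<in>UNIV. l $ i) = 1}" if "\<theta> \<in> U" for \<theta>
    using dual[OF that] stationary[OF that] unfolding bundle_opt_dual_def by auto
  fix xs l assume xs: "xs \<longlonglongrightarrow> \<theta>0" and xs_U: "\<forall>n. xs n \<in> U" and lim: "(\<lambda>n. lam (xs n)) \<longlonglongrightarrow> l"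
  have "l \<in> {l. (\<forall>i. 0 \<le> l $ i) \<and> (\<Sum>i\<in>UNIV. l $ i) = 1}"
    using closed_sequentially[OF compact_imp_closed[OF compact_prob_simplex_cart] _ lim] in_simplex xs_U
    by blast
  moreover have "(G \<theta>0 *v primal_point (G \<theta>0) l + h \<theta>0) $ i = (G \<theta>0 *v primal_point (G \<theta>0) l + h \<theta>0) $ i'"
    for i i'
  proof -
    let ?W = "\<lambda>\<theta> l. G \<theta> *v primal_point (G \<theta>) l + h \<theta>"
    have "(\<lambda>n. ?W (xs n) (lam (xs n)) $ i - ?W (xs n) (lam (xs n)) $ i')
        \<longlonglongrightarrow> ?W \<theta>0 l $ i - ?W \<theta>0 l $ i'"
      using G h xs lim unfolding continuous_at_sequentially comp_def matrix_vector_mult_def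
      by (intro tendsto_intros) auto
    moreover have "?W (xs n) (lam (xs n)) $ i - ?W (xs n) (lam (xs n)) $ i' = 0" for n
      using active[OF xs_U[rule_format]] stationary(2)[OF xs_U[rule_format]] by simp
    ultimately have "(\<lambda>n. 0) \<longlonglongrightarrow> ?W \<theta>0 l $ i - ?W \<theta>0 l $ i'"
      by simp
    from LIMSEQ_unique[OF tendsto_const this] show ?thesis
      by simp
  qed
  ultimately show "l = lam \<theta>0"
    by (intro bundle_opt_dual_unique[OF dual[OF U(2)] box[OF U(2)] active[OF U(2)] rank]) auto
qed

fun kkt_op :: "real^'n^'k \<Rightarrow> real^'n \<Rightarrow> (real^'n) \<times> (real^'k) \<times> real \<Rightarrow> (real^'n) \<times> (real^'k) \<times> real" where
  "kkt_op G y (u, m, s) =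
    ((\<chi> j. (1 / y $ j + 1 / (1 - y $ j)) * u $ j) + m v* G, G *v u - (\<chi> i. s), - (\<Sum>i\<in>UNIV. m $ i))"

lemma linear_kkt_op: "linear (kkt_op G y)"
  for G :: "real^'n^'k"
proof (rule linearI)
  fix z w :: "(real^'n) \<times> (real^'k) \<times> real" and r :: real
  show "kkt_op G y (z + w) = kkt_op G y z + kkt_op G y w"
    by (cases z, cases w) (simp add: vec_eq_iff algebra_simps add_divide_distrib sum.distrib)
  show "kkt_op G y (r *\<^sub>R z) = r *\<^sub>R kkt_op G y z"
    by (cases z) (simp add: vec_eq_iff algebra_simps sum_distrib_left scaleR_vector_matrix_assoc)
qed

lemma kkt_op_self_adjoint: "kkt_op G y z \<bullet> w = z \<bullet> kkt_op G y w"
  for G :: "real^'n^'k"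
proof (cases z, cases w)
  fix u m s u' m' s'
  assume "z = (u, m, s)" "w = (u', m', s')"
  moreover have "(m v* G) \<bullet> u' = m \<bullet> (G *v u')" "(m' v* G) \<bullet> u = m' \<bullet> (G *v u)"
    by (rule dot_lmul_matrix)+
  ultimately show ?thesis
    by (simp add: inner_vec_def inner_add_left inner_diff_left inner_add_right inner_diff_right
        sum.distrib sum_subtractf sum_distrib_left algebra_simps)
qed

lemma kkt_op_adjoint_eq:
  assumes "kkt_op G y c = (- d, 0, 0)" "kkt_op G y z = - b"
  shows "fst z \<bullet> d = c \<bullet> b"
proof -
  have "fst z \<bullet> d = - (kkt_op G y c \<bullet> z)"
    using assms(1) by (cases z) (simp add: inner_commute)
  also have "\<dots> = c \<bullet> b"
    using assms(2) by (simp add: kkt_op_self_adjoint)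
  finally show ?thesis .
qed

lemma sum_UNIV_Plus: "(\<Sum>r\<in>UNIV. g r) = (\<Sum>a\<in>UNIV. g (Inl a)) + (\<Sum>b\<in>UNIV. g (Inr b))"
  for g :: "'a::finite + 'b::finite \<Rightarrow> 'c::comm_monoid_add"
  by (subst UNIV_Plus_UNIV[symmetric], subst sum.Plus) (simp_all add: comp_def)

lemma stack3_eq_iff: "stack3 u m s = stack3 u' m' s' \<longleftrightarrow> u = u' \<and> m = m' \<and> s = s'"
proof
  assume "stack3 u m s = stack3 u' m' s'"
  then have "stack3 u m s $ r = stack3 u' m' s' $ r" for r
    by simp
  from this[of "Inl _"] this[of "Inr (Inl _)"] this[of "Inr (Inr ())"]
  show "u = u' \<and> m = m' \<and> s = s'"
    by (simp add: stack3_def vec_eq_iff)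
qed simp

lemma kkt_matrix_mult_stack3:
  "kkt_matrix G y *v stack3 u m s = stack3 a b c \<longleftrightarrow> kkt_op G y (u, m, s) = (a, b, c)"
proof -
  have "kkt_matrix G y *v stack3 u m s = (case kkt_op G y (u, m, s) of (a, b, c) \<Rightarrow> stack3 a b c)"
  proof (subst vec_eq_iff, intro allI)
    fix r :: "'a + ('b + unit)"
    show "(kkt_matrix G y *v stack3 u m s) $ r = (case kkt_op G y (u, m, s) of (a, b, c) \<Rightarrow> stack3 a b c) $ r"
      by (cases r rule: sum.exhaust[case_product sum.exhaust])
        (auto simp: matrix_vector_mult_def sum_UNIV_Plus kkt_matrix_def stack3_def vector_matrix_mult_def
          if_distrib[of "\<lambda>x. x * _"] if_distrib[of "\<lambda>x. _ * x"] sum_negf mult.commute cong: if_cong split: sum.split)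
  qed
  then show ?thesis
    by (simp add: stack3_eq_iff)
qed

lemma inj_kkt_op:
  assumes "invertible (kkt_matrix G y)"
  shows "inj (kkt_op G y)"
proof (rule injI)
  fix z w assume eq: "kkt_op G y z = kkt_op G y w"
  obtain u m s u' m' s' where z: "z = (u, m, s)" and w: "w = (u', m', s')"
    by (cases z, cases w) auto
  obtain a b c where abc: "kkt_op G y z = (a, b, c)"
    by (cases "kkt_op G y z") auto
  have "kkt_matrix G y *v stack3 u m s = stack3 a b c" "kkt_matrix G y *v stack3 u' m' s' = stack3 a b c"
    using abc eq unfolding z w by (simp_all only: kkt_matrix_mult_stack3)
  moreover obtain K' where "K' ** kkt_matrix G y = mat 1"
    using assms unfolding invertible_def by blast
  ultimately have "stack3 u m s = stack3 u' m' s'"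
    by (metis matrix_vector_mul_assoc matrix_vector_mul_lid)
  then show "z = w"
    unfolding z w by (simp add: stack3_eq_iff)
qed

lemma kkt_op_inj_dual_rank:
  assumes "inj (kkt_op G y)" "\<mu> v* G = 0" "(\<Sum>i\<in>UNIV. \<mu> $ i) = 0"
  shows "\<mu> = 0"
proof -
  have "kkt_op G y (0, \<mu>, 0) = kkt_op G y (0, 0, 0)"
    using assms(2,3) by simp
  from injD[OF assms(1) this] show ?thesis
    by simp
qed

lemma has_derivative_logit:
  fixes y :: "'a::real_normed_vector \<Rightarrow> real^'n"
  assumes y: "(y has_derivative y') (at a)" and y_a: "\<And>j. 0 < y a $ j \<and> y a $ j < 1"
  shows "((\<lambda>x. \<chi> j. ln (y x $ j) - ln (1 - y x $ j)) has_derivative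
      (\<lambda>v. \<chi> j. (1 / y a $ j + 1 / (1 - y a $ j)) * y' v $ j)) (at a)"
proof (rule has_derivative_eq_rhs)
  have "((\<lambda>x. ln (y x $ j)) has_derivative (\<lambda>v. y' v $ j * inverse (y a $ j))) (at a)"
    "((\<lambda>x. ln (1 - y x $ j)) has_derivative (\<lambda>v. (0 - y' v $ j) * inverse (1 - y a $ j))) (at a)" for j
    by (intro has_derivative_ln has_derivative_diff has_derivative_const has_derivative_vec_nth y;
        use y_a in simp)+
  then show "((\<lambda>x. \<chi> j. ln (y x $ j) - ln (1 - y x $ j)) has_derivative
      (\<lambda>v. \<chi> j. y' v $ j * inverse (y a $ j) - (0 - y' v $ j) * inverse (1 - y a $ j))) (at a)"
    by (intro has_derivative_vec_lambda has_derivative_diff)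
qed (simp add: fun_eq_iff field_simps)

text \<open>Stationarity in \<open>y\<close> is written in logit form, so the residual is smooth near the solution
  and its Jacobian in \<open>(y, l, t)\<close> is \<open>kkt_op\<close>.\<close>
fun kkt_residual :: "real^'n^'k \<Rightarrow> real^'k \<Rightarrow> (real^'n) \<times> (real^'k) \<times> real \<Rightarrow> (real^'n) \<times> (real^'k) \<times> real" where
  "kkt_residual G h (y, l, t) =
    ((\<chi> j. ln (y $ j) - ln (1 - y $ j)) + l v* G, G *v y + h - (\<chi> i. t), 1 - (\<Sum>i\<in>UNIV. l $ i))"

lemma kkt_residual_eq_0:
  assumes "bundle_opt_dual G h y t l" "y \<in> unit_box" "\<And>i. (G *v y + h) $ i = t"
  shows "kkt_residual G h (y, l, t) = 0"
proof -
  have "y = primal_point G l" "(\<Sum>i\<in>UNIV. l $ i) = 1"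
    using bundle_opt_dual_stationary[OF assms(1,2)] by auto
  then show ?thesis
    using assms(3) by (simp add: primal_point_def ln_sigmoid_diff vec_eq_iff zero_prod_def)
qed

lemma has_derivative_kkt_residual:
  fixes G :: "'p::real_normed_vector \<Rightarrow> real^'n^'k"
  assumes G: "(G has_derivative G') (at \<theta>0)" and h: "(h has_derivative h') (at \<theta>0)"
    and y0: "\<And>j. 0 < y0 $ j \<and> y0 $ j < 1"
  shows "((\<lambda>w. kkt_residual (G (snd w)) (h (snd w)) (fst w)) has_derivative
      (\<lambda>w. kkt_op (G \<theta>0) y0 (fst w) + (l0 v* G' (snd w), G' (snd w) *v y0 + h' (snd w), 0)))
    (at ((y0, l0, t0), \<theta>0))"
proof -
  let ?w0 = "((y0, l0, t0), \<theta>0)"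
  have kkt_residual_fst_snd: "kkt_residual G h z =
      ((\<chi> j. ln (fst z $ j) - ln (1 - fst z $ j)) + fst (snd z) v* G,
       G *v fst z + h - (\<chi> i. snd (snd z)), 1 - (\<Sum>i\<in>UNIV. fst (snd z) $ i))" for G h z
    by (cases z) simp
  have dG: "((\<lambda>w. G (snd w)) has_derivative (\<lambda>v. G' (snd v))) (at ?w0)"
    and dh: "((\<lambda>w. h (snd w)) has_derivative (\<lambda>v. h' (snd v))) (at ?w0)"
    using has_derivative_compose[OF has_derivative_snd[OF has_derivative_ident]] G h by auto
  have dy: "((\<lambda>w. fst (fst w)) has_derivative (\<lambda>v. fst (fst v))) (at ?w0)"
    and dl: "((\<lambda>w. fst (snd (fst w))) has_derivative (\<lambda>v. fst (snd (fst v)))) (at ?w0)"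
    and dt: "((\<lambda>w. snd (snd (fst w))) has_derivative (\<lambda>v. snd (snd (fst v)))) (at ?w0)"
    by (intro derivative_intros)+
  have dlogit: "((\<lambda>w. \<chi> j. ln (fst (fst w) $ j) - ln (1 - fst (fst w) $ j)) has_derivative
      (\<lambda>v. \<chi> j. (1 / y0 $ j + 1 / (1 - y0 $ j)) * fst (fst v) $ j)) (at ?w0)"
    using has_derivative_logit[OF dy] y0 by simp
  have dlG: "((\<lambda>w. fst (snd (fst w)) v* G (snd w)) has_derivative
      (\<lambda>v. fst (snd (fst v)) v* G \<theta>0 + l0 v* G' (snd v))) (at ?w0)"
    using has_derivative_vector_matrix_mult[OF dl dG] by simp
  have dGy: "((\<lambda>w. G (snd w) *v fst (fst w)) has_derivative
      (\<lambda>v. G' (snd v) *v y0 + G \<theta>0 *v fst (fst v))) (at ?w0)"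
    using has_derivative_matrix_vector_mult[OF dG dy] by simp
  have "((\<lambda>w. kkt_residual (G (snd w)) (h (snd w)) (fst w)) has_derivative
      (\<lambda>v. ((\<chi> j. (1 / y0 $ j + 1 / (1 - y0 $ j)) * fst (fst v) $ j)
              + (fst (snd (fst v)) v* G \<theta>0 + l0 v* G' (snd v)),
            (G' (snd v) *v y0 + G \<theta>0 *v fst (fst v)) + h' (snd v) - (\<chi> i. snd (snd (fst v))),
            0 - (\<Sum>i\<in>UNIV. fst (snd (fst v)) $ i)))) (at ?w0)"
    unfolding kkt_residual_fst_snd
    by (intro has_derivative_Pair has_derivative_add has_derivative_diff dlogit dlG dGy dh dl dt
        has_derivative_vec_lambda has_derivative_const has_derivative_sum has_derivative_vec_nth)
  then show ?thesis
    by (rule has_derivative_eq_rhs) (auto simp: fun_eq_iff algebra_simps)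
qed

lemma bundle_primal_dual_continuous:
  fixes G :: "'p::metric_space \<Rightarrow> real^'n^'k"
  assumes G: "continuous (at \<theta>0) G" and h: "continuous (at \<theta>0) h" and U: "open U" "\<theta>0 \<in> U"
    and box: "\<And>\<theta>. \<theta> \<in> U \<Longrightarrow> yhat \<theta> \<in> unit_box"
    and dual: "\<And>\<theta>. \<theta> \<in> U \<Longrightarrow> bundle_opt_dual (G \<theta>) (h \<theta>) (yhat \<theta>) (tt \<theta>) (lam \<theta>)"
    and active: "\<And>\<theta> i. \<theta> \<in> U \<Longrightarrow> (G \<theta> *v yhat \<theta> + h \<theta>) $ i = tt \<theta>"
    and rank: "\<And>\<mu>. \<mu> v* G \<theta>0 = 0 \<Longrightarrow> (\<Sum>i\<in>UNIV. \<mu> $ i) = 0 \<Longrightarrow> \<mu> = 0"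
  shows "isCont (\<lambda>\<theta>. (yhat \<theta>, lam \<theta>, tt \<theta>)) \<theta>0"
proof -
  obtain i0 :: 'k where True by blast
  let ?z = "\<lambda>\<theta>. (primal_point (G \<theta>) (lam \<theta>), lam \<theta>, (G \<theta> *v primal_point (G \<theta>) (lam \<theta>) + h \<theta>) $ i0)"
  have "isCont lam \<theta>0"
    by (rule bundle_opt_dual_continuous[OF G h U box dual active rank])
  then have "isCont ?z \<theta>0"
    using G h unfolding continuous_at matrix_vector_mult_def by (intro tendsto_intros)
  moreover have "eventually (\<lambda>\<theta>. (yhat \<theta>, lam \<theta>, tt \<theta>) = ?z \<theta>) (nhds \<theta>0)"
    using eventually_nhds_in_open[OF U]
  proof eventually_elim
    case (elim \<theta>)
    then show ?case
      using active[OF elim, of i0] bundle_opt_dual_stationary(2)[OF dual[OF elim] box[OF elim]] by simp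
  qed
  ultimately show ?thesis
    by (simp only: isCont_cong)
qed

lemma bundle_solution_has_derivative:
  fixes G :: "'p::real_normed_vector \<Rightarrow> real^'n^'k"
  assumes U: "open U" "\<theta>0 \<in> U"
    and G: "(G has_derivative G') (at \<theta>0)" and h: "(h has_derivative h') (at \<theta>0)"
    and box: "\<And>\<theta>. \<theta> \<in> U \<Longrightarrow> yhat \<theta> \<in> unit_box"
    and dual: "\<And>\<theta>. \<theta> \<in> U \<Longrightarrow> bundle_opt_dual (G \<theta>) (h \<theta>) (yhat \<theta>) (tt \<theta>) (lam \<theta>)"
    and active: "\<And>\<theta> i. \<theta> \<in> U \<Longrightarrow> (G \<theta> *v yhat \<theta> + h \<theta>) $ i = tt \<theta>"
    and nonsing: "invertible (kkt_matrix (G \<theta>0) (yhat \<theta>0))"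
  obtains Z where "(yhat has_derivative (\<lambda>v. fst (Z v))) (at \<theta>0)"
    and "\<And>v. kkt_op (G \<theta>0) (yhat \<theta>0) (Z v) = - (lam \<theta>0 v* G' v, G' v *v yhat \<theta>0 + h' v, 0)"
proof -
  define K where "K = kkt_op (G \<theta>0) (yhat \<theta>0)"
  have K: "linear K" "inj K"
    using linear_kkt_op inj_kkt_op[OF nonsing] unfolding K_def by auto
  then obtain L where L: "linear L" "\<And>z. L (K z) = z" "\<And>w. K (L w) = w"
    using linear_injective_isomorphism by metis
  note rank = kkt_op_inj_dual_rank[OF K(2)[unfolded K_def]]
  define z where "z \<theta> = (yhat \<theta>, lam \<theta>, tt \<theta>)" for \<theta>
  have z_cont: "isCont z \<theta>0"
    unfolding z_def using has_derivative_continuous[OF G] has_derivative_continuous[OF h]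
    by (rule bundle_primal_dual_continuous[OF _ _ U box dual active rank])
  define F where "F w = kkt_residual (G (snd w)) (h (snd w)) (fst w)" for w
  have F_z: "F (z \<theta>, \<theta>) = F (z \<theta>0, \<theta>0)" if "\<theta> \<in> U" for \<theta>
    using kkt_residual_eq_0[OF dual box active] that U(2) by (simp add: F_def z_def)
  have y0: "0 < yhat \<theta>0 $ j \<and> yhat \<theta>0 $ j < 1" for j
    using bundle_opt_dual_stationary(2)[OF dual box, OF U(2) U(2)] sigmoid_gt_0 sigmoid_less_1
    by (simp add: primal_point_def)
  define F' where "F' w = K (fst w) + (lam \<theta>0 v* G' (snd w), G' (snd w) *v yhat \<theta>0 + h' (snd w), 0)" for w
  have F: "(F has_derivative F') (at (z \<theta>0, \<theta>0))"
    unfolding F_def F'_def K_def z_def by (rule has_derivative_kkt_residual[OF G h y0])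
  have "G' 0 = 0" "h' 0 = 0"
    using G h by (simp_all add: has_derivative_linear linear_0)
  then have "L (F' (u, 0)) = u" for u
    by (simp add: F'_def L(2) zero_prod_def[symmetric])
  then have z: "(z has_derivative (\<lambda>v. - L (F' (0, v)))) (at \<theta>0)"
    using implicit_function_has_derivative[OF F linear_conv_bounded_linear[THEN iffD1, OF L(1)] _ z_cont U F_z]
    by blast
  show ?thesis
  proof
    show "(yhat has_derivative (\<lambda>v. fst (- L (F' (0, v))))) (at \<theta>0)"
      using has_derivative_fst[OF z] U by (rule has_derivative_transform_within_open) (simp add: z_def)
    show "kkt_op (G \<theta>0) (yhat \<theta>0) (- L (F' (0, v))) = - (lam \<theta>0 v* G' v, G' v *v yhat \<theta>0 + h' v, 0)" for v
      using linear_0[OF K(1)] by (simp add: K_def[symmetric] linear_neg[OF K(1)] L(3) F'_def)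
  qed
qed

lemma cutting_planes_has_derivative:
  fixes f :: "'x \<Rightarrow> real^'n \<Rightarrow> 'p::euclidean_space \<Rightarrow> real" and ys :: "'k::finite \<Rightarrow> real^'n"
  assumes f_diff: "\<And>y. (\<lambda>\<theta>. f x y \<theta>) differentiable (at a)"
    and grad_diff: "\<And>y. (\<lambda>\<theta>. grad (\<lambda>y. f x y \<theta>) y) differentiable (at a)"
  obtains G' where "(Gmat f x ys has_derivative G') (at a)"
    and "(hvec f x ys has_derivative (\<lambda>v. \<chi> i. v \<bullet> grad (\<lambda>\<theta>. f x (ys i) \<theta>) a - G' v $ i \<bullet> ys i))
      (at a)"
    and "\<And>v i w. G' v $ i \<bullet> w = v \<bullet> grad (\<lambda>\<theta>. grad (\<lambda>y. f x y \<theta>) (ys i) \<bullet> w) a"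
proof -
  define g where "g i \<theta> = grad (\<lambda>y. f x y \<theta>) (ys i)" for i \<theta>
  have "\<forall>i. \<exists>D. (g i has_derivative D) (at a)"
    using grad_diff unfolding g_def differentiable_def by blast
  then obtain Dg where Dg: "\<And>i. (g i has_derivative Dg i) (at a)"
    by (metis choice)
  have G': "(Gmat f x ys has_derivative (\<lambda>v. \<chi> i. Dg i v)) (at a)"
    unfolding Gmat_def g_def[symmetric] by (intro has_derivative_vec_lambda Dg)
  show ?thesis
  proof
    show "(Gmat f x ys has_derivative (\<lambda>v. \<chi> i. Dg i v)) (at a)"
      by (rule G')
    have "((\<lambda>\<theta>. f x (ys i) \<theta> - Gmat f x ys \<theta> $ i \<bullet> ys i) has_derivative
        (\<lambda>v. v \<bullet> grad (\<lambda>\<theta>. f x (ys i) \<theta>) a - (\<chi> i. Dg i v) $ i \<bullet> ys i)) (at a)" for i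
      using has_gderiv_grad[OF f_diff] unfolding gderiv_def
      by (intro has_derivative_diff has_derivative_inner_left has_derivative_vec_nth G')
    then show "(hvec f x ys has_derivative
        (\<lambda>v. \<chi> i. v \<bullet> grad (\<lambda>\<theta>. f x (ys i) \<theta>) a - (\<chi> i. Dg i v) $ i \<bullet> ys i)) (at a)"
      unfolding hvec_def by (rule has_derivative_vec_lambda)
    fix v i w
    have Dgw: "((\<lambda>\<theta>. g i \<theta> \<bullet> w) has_derivative (\<lambda>v. Dg i v \<bullet> w)) (at a)"
      by (rule has_derivative_inner_left[OF Dg])
    then have "GDERIV (\<lambda>\<theta>. g i \<theta> \<bullet> w) a :> grad (\<lambda>\<theta>. g i \<theta> \<bullet> w) a"
      by (intro has_gderiv_grad differentiableI)
    from has_derivative_unique[OF Dgw this[unfolded gderiv_def]]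
    show "(\<chi> i. Dg i v) $ i \<bullet> w = v \<bullet> grad (\<lambda>\<theta>. grad (\<lambda>y. f x y \<theta>) (ys i) \<bullet> w) a"
      unfolding g_def by (simp add: fun_eq_iff)
  qed
qed

lemma cutting_plane_adjoint_eq:
  fixes A :: "real^'n^'k" and v :: "'p::real_inner"
  assumes "\<And>i w. A $ i \<bullet> w = v \<bullet> \<Gamma> i w"
  shows "(cy, cl, ct) \<bullet> (l v* A, A *v y + (\<chi> i. v \<bullet> gf i - A $ i \<bullet> ys i), 0)
    = v \<bullet> (\<Sum>i\<in>UNIV. cl $ i *\<^sub>R gf i + \<Gamma> i (l $ i *\<^sub>R cy + cl $ i *\<^sub>R (y - ys i)))"
proof -
  have "(cy, cl, ct) \<bullet> (l v* A, A *v y + (\<chi> i. v \<bullet> gf i - A $ i \<bullet> ys i), 0)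
      = l \<bullet> (A *v cy) + cl \<bullet> (A *v y + (\<chi> i. v \<bullet> gf i - A $ i \<bullet> ys i))"
    by (simp add: inner_commute[of cy] dot_lmul_matrix)
  also have "\<dots> = (\<Sum>i\<in>UNIV. l $ i * (A $ i \<bullet> cy) + cl $ i * (v \<bullet> gf i + A $ i \<bullet> (y - ys i)))"
    unfolding inner_vec_def[of l] inner_vec_def[of cl]
    by (simp add: matrix_vector_mul_component sum.distrib sum_subtractf inner_diff_right algebra_simps)
  also have "\<dots> = v \<bullet> (\<Sum>i\<in>UNIV. cl $ i *\<^sub>R gf i + \<Gamma> i (l $ i *\<^sub>R cy + cl $ i *\<^sub>R (y - ys i)))"
    unfolding inner_sum_right inner_add_right[of v] inner_scaleR_right[of v] assms[symmetric]
    by (simp add: inner_add_right inner_diff_right algebra_simps)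
  finally show ?thesis .
qed

theorem proposition3:
  fixes f :: "'x \<Rightarrow> real^'n::finite \<Rightarrow> real^'p::finite \<Rightarrow> real" and x :: 'x
    and ys :: "'k::finite \<Rightarrow> real^'n::finite"
    and loss :: "real^'n \<Rightarrow> real^'n \<Rightarrow> real" and ystar :: "real^'n"
    and yhat :: "real^'p \<Rightarrow> real^'n" and tt :: "real^'p \<Rightarrow> real" and lam :: "real^'p \<Rightarrow> real^'k"
    and U :: "(real^'p) set" and \<theta>0 :: "real^'p"
    and cy :: "real^'n" and clam :: "real^'k" and ct :: real
  assumes f_diff_y: "\<And>y \<theta>. (\<lambda>y. f x y \<theta>) differentiable (at y)"
    and f_diff_theta: "\<And>y \<theta>. (\<lambda>\<theta>. f x y \<theta>) differentiable (at \<theta>)"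
    and grad_y_diff_theta: "\<And>y \<theta>. (\<lambda>\<theta>. grad (\<lambda>y. f x y \<theta>) y) differentiable (at \<theta>)"
    and ys_in: "\<And>i j. 0 < ys i $ j \<and> ys i $ j < 1"
    and U_open: "open U" and \<theta>0_in: "\<theta>0 \<in> U"
    and sol: "\<And>\<theta>. \<theta> \<in> U \<Longrightarrow> bundle_solution (Gmat f x ys \<theta>) (hvec f x ys \<theta>) (yhat \<theta>) (tt \<theta>)"
    and dual: "\<And>\<theta>. \<theta> \<in> U \<Longrightarrow>
       bundle_opt_dual (Gmat f x ys \<theta>) (hvec f x ys \<theta>) (yhat \<theta>) (tt \<theta>) (lam \<theta>)"
    and active: "\<And>\<theta> i. \<theta> \<in> U \<Longrightarrow>
       (Gmat f x ys \<theta> *v yhat \<theta> + hvec f x ys \<theta>) $ i = tt \<theta>"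
    and loss_diff: "\<And>y. (\<lambda>y. loss y ystar) differentiable (at y)"
    and nonsing: "invertible (kkt_matrix (Gmat f x ys \<theta>0) (yhat \<theta>0))"
    and lin_sys: "kkt_matrix (Gmat f x ys \<theta>0) (yhat \<theta>0) *v stack3 cy clam ct
       = stack3 (- grad (\<lambda>y. loss y ystar) (yhat \<theta>0)) 0 0"
  shows "GDERIV (\<lambda>\<theta>. loss (yhat \<theta>) ystar) \<theta>0 :>
    (\<Sum>i\<in>UNIV. (clam $ i) *\<^sub>R grad (\<lambda>\<theta>. f x (ys i) \<theta>) \<theta>0
      + grad (\<lambda>\<theta>. (grad (\<lambda>y. f x y \<theta>) (ys i)) \<bullet>
                 ((lam \<theta>0 $ i) *\<^sub>R cy + (clam $ i) *\<^sub>R (yhat \<theta>0 - ys i))) \<theta>0)"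
proof -
  let ?G = "Gmat f x ys" and ?y0 = "yhat \<theta>0"
  let ?gf = "\<lambda>i. grad (\<lambda>\<theta>. f x (ys i) \<theta>) \<theta>0"
  obtain G' where G': "(?G has_derivative G') (at \<theta>0)"
    and h': "(hvec f x ys has_derivative (\<lambda>v. \<chi> i. v \<bullet> ?gf i - G' v $ i \<bullet> ys i)) (at \<theta>0)"
    and G'_grad: "\<And>v i w. G' v $ i \<bullet> w = v \<bullet> grad (\<lambda>\<theta>. grad (\<lambda>y. f x y \<theta>) (ys i) \<bullet> w) \<theta>0"
    using cutting_planes_has_derivative[where f = f and x = x and a = \<theta>0, OF f_diff_theta grad_y_diff_theta]
    by blast
  have box: "yhat \<theta> \<in> unit_box" if "\<theta> \<in> U" for \<theta>
    using sol[OF that] unfolding bundle_solution_def bundle_feasible_def by blast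
  obtain Z where yhat': "(yhat has_derivative (\<lambda>v. fst (Z v))) (at \<theta>0)"
    and Z: "\<And>v. kkt_op (?G \<theta>0) ?y0 (Z v)
      = - (lam \<theta>0 v* G' v, G' v *v ?y0 + (\<chi> i. v \<bullet> ?gf i - G' v $ i \<bullet> ys i), 0)"
    using bundle_solution_has_derivative[OF U_open \<theta>0_in G' h' box dual active nonsing] by blast
  define d where "d = grad (\<lambda>y. loss y ystar) ?y0"
  have "kkt_op (?G \<theta>0) ?y0 (cy, clam, ct) = (- d, 0, 0)"
    using lin_sys unfolding d_def kkt_matrix_mult_stack3 .
  from kkt_op_adjoint_eq[OF this Z] cutting_plane_adjoint_eq[OF G'_grad]
  have adjoint: "fst (Z v) \<bullet> d = v \<bullet> (\<Sum>i\<in>UNIV. clam $ i *\<^sub>R ?gf i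
      + grad (\<lambda>\<theta>. grad (\<lambda>y. f x y \<theta>) (ys i) \<bullet> (lam \<theta>0 $ i *\<^sub>R cy + clam $ i *\<^sub>R (?y0 - ys i))) \<theta>0)"
    for v by simp
  have "((\<lambda>\<theta>. loss (yhat \<theta>) ystar) has_derivative (\<lambda>v. fst (Z v) \<bullet> d)) (at \<theta>0)"
    using has_derivative_compose[OF yhat' has_gderiv_grad[OF loss_diff, unfolded gderiv_def]]
    unfolding d_def .
  with adjoint show ?thesis
    unfolding gderiv_def by simp
qed

end
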